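(* For any $F$-weighted boundary stratum $\mathcal{S}$, the cone $C(\mathcal{S})\subset\mathbf{S}_{\mathbb{Q}}(F)$ strictly contains the subspace $N(\mathcal{S})$.
   Context: $F$ is a totally real number field of degree $g$ with trace pairing $\langle x,y\rangle=\mathrm{Tr}_{F/\mathbb{Q}}(xy)$. An $F$-weighted stable curve is a stable curve of arithmetic genus $g$ and geometric genus $0$ with an element of a lattice $\mathcal{I}\subset F$ (rank $g$ additive subgroup) attached to each branch at each node, such that the two branches at a node have opposite weights, the weights on each component sum to zero, and the weights span $\mathcal{I}$. An $F$-weighted boundary stratum $\mathcal{S}$ is the moduli space of weighted stable curves topologically equivalent (weight-preservingly) to a fixed one; its weights are those of its nodes. $\mathrm{Sym}_{\mathbb{Q}}(F)\subset F\otimes_{\mathbb{Q}}F$ is the subspace of symmetric tensors, $\mathbf{S}_{\mathbb{Q}}(F)$ the quotient of $F\otimes_{\mathbb{Q}}F$ by the span of $x\otimes y-y\otimes x$, dual via $\langle a\otimes b,c\otimes d\rangle=\langle a,c\rangle\langle b,d\rangle$. $N(\mathcal{S})\subset\mathbf{S}_{\mathbb{Q}}(F)$ is the annihilator of the span of $\{r\otimes r: r\text{ a weight of }\mathcal{S}\}$, and $C(\mathcal{S})=\{x\in\mathbf{S}_{\mathbb{Q}}(F):\langle x,r\otimes r\rangle\geq 0\text{ for each weight } r\text{ of }\mathcal{S}\}$. *)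

theory Defs
  imports Complex_Main
begin

definition Q_basis :: "'f::field_char_0 list \<Rightarrow> bool" where
  "Q_basis b \<longleftrightarrow> (\<forall>x. \<exists>!q::nat \<Rightarrow> rat. (\<forall>i. length b \<le> i \<longrightarrow> q i = 0) \<and>
                         x = (\<Sum>i<length b. of_rat (q i) * b ! i))"

definition coords :: "'f::field_char_0 list \<Rightarrow> 'f \<Rightarrow> nat \<Rightarrow> rat" where
  "coords b x = (THE q. (\<forall>i. length b \<le> i \<longrightarrow> q i = 0) \<and>
                         x = (\<Sum>i<length b. of_rat (q i) * b ! i))"

definition trace_wrt :: "'f::field_char_0 list \<Rightarrow> 'f \<Rightarrow> rat" where
  "trace_wrt b x = (\<Sum>i<length b. coords b (x * b ! i) i)"

text \<open>The trace Tr_{F/Q} (computed in some Q-basis; basis independent).\<close>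
definition Tr :: "'f::field_char_0 \<Rightarrow> rat" where
  "Tr x = trace_wrt (SOME b. Q_basis b) x"

definition trace_pairing :: "'f::field_char_0 \<Rightarrow> 'f \<Rightarrow> rat" where
  "trace_pairing x y = Tr (x * y)"

definition number_field_of_degree :: "'f::field_char_0 itself \<Rightarrow> nat \<Rightarrow> bool" where
  "number_field_of_degree _ g \<longleftrightarrow> (\<exists>b::'f list. Q_basis b \<and> length b = g)"

definition field_embedding :: "('f::field_char_0 \<Rightarrow> complex) \<Rightarrow> bool" where
  "field_embedding \<sigma> \<longleftrightarrow> \<sigma> 1 = 1 \<and> (\<forall>x y. \<sigma> (x + y) = \<sigma> x + \<sigma> y) \<and>
                        (\<forall>x y. \<sigma> (x * y) = \<sigma> x * \<sigma> y)"

definition totally_real :: "'f::field_char_0 itself \<Rightarrow> bool" where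
  "totally_real _ \<longleftrightarrow> (\<forall>\<sigma>::'f \<Rightarrow> complex. field_embedding \<sigma> \<longrightarrow> (\<forall>x. \<sigma> x \<in> \<real>))"

definition int_span :: "'f::field_char_0 set \<Rightarrow> 'f set" where
  "int_span S = {\<Sum>s\<in>S. of_int (n s) * s | n. True}"

definition lattice :: "'f::field_char_0 set \<Rightarrow> bool" where
  "lattice I \<longleftrightarrow> (\<exists>v. Q_basis v \<and> I = {\<Sum>i<length v. of_int (n i) * v ! i | n. True})"

text \<open>Dual graph of a stable curve of arithmetic genus g and geometric genus 0:
  finite set H of branches (half-edges) at nodes, finite set V of components (all rational),
  vert h = component containing branch h, iota h = the other branch at the same node.\<close>
definition stable_rational_graph ::
  "'h set \<Rightarrow> 'v set \<Rightarrow> ('h \<Rightarrow> 'v) \<Rightarrow> ('h \<Rightarrow> 'h) \<Rightarrow> nat \<Rightarrow> bool" where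
  "stable_rational_graph H V vert iota g \<longleftrightarrow>
     finite H \<and> finite V \<and> V \<noteq> {} \<and>
     (\<forall>h\<in>H. vert h \<in> V) \<and>
     (\<forall>h\<in>H. iota h \<in> H \<and> iota h \<noteq> h \<and> iota (iota h) = h) \<and>
     (\<forall>u\<in>V. \<forall>u'\<in>V. (u, u') \<in> {(vert h, vert (iota h)) | h. h \<in> H}\<^sup>*) \<and>
     card H + 2 = 2 * g + 2 * card V \<and>
     (\<forall>u\<in>V. card {h\<in>H. vert h = u} \<ge> 3)"

definition F_weighted_stable_curve ::
  "'f::field_char_0 set \<Rightarrow> 'h set \<Rightarrow> 'v set \<Rightarrow> ('h \<Rightarrow> 'v) \<Rightarrow> ('h \<Rightarrow> 'h) \<Rightarrow> ('h \<Rightarrow> 'f) \<Rightarrow> nat \<Rightarrow> bool" where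
  "F_weighted_stable_curve I H V vert iota w g \<longleftrightarrow>
     stable_rational_graph H V vert iota g \<and>
     (\<forall>h\<in>H. w h \<in> I) \<and>
     (\<forall>h\<in>H. w (iota h) = - w h) \<and>
     (\<forall>u\<in>V. (\<Sum>h\<in>{h\<in>H. vert h = u}. w h) = 0) \<and>
     int_span (w ` H) = I"

text \<open>Elements of F \<otimes>_Q F are represented by formal sums \<Sum> a_i \<otimes> b_i (lists of pairs);
  elements of S_Q(F) are represented by such representatives.\<close>
type_synonym 'f tensor = "('f \<times> 'f) list"

definition tensor_pairing :: "'f::field_char_0 tensor \<Rightarrow> 'f tensor \<Rightarrow> rat" where
  "tensor_pairing xs ys =
     (\<Sum>(a, b)\<leftarrow>xs. \<Sum>(c, d)\<leftarrow>ys. trace_pairing a c * trace_pairing b d)"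

definition sq_span :: "'f::field_char_0 set \<Rightarrow> 'f tensor set" where
  "sq_span W = {ys. \<forall>p\<in>set ys. \<exists>q::rat. \<exists>r\<in>W. p = (of_rat q * r, r)}"

definition N_set :: "'f::field_char_0 set \<Rightarrow> 'f tensor set" where
  "N_set W = {x. \<forall>y\<in>sq_span W. tensor_pairing x y = 0}"

definition C_set :: "'f::field_char_0 set \<Rightarrow> 'f tensor set" where
  "C_set W = {x. \<forall>r\<in>W. tensor_pairing x [(r, r)] \<ge> 0}"

end

theory Submission
  imports Defs
begin

text \<open>N(S) lies in C(S) since its elements pair to 0 with every r \<otimes> r. The weights span a
  nonzero lattice, so some weight r is nonzero. The pure square x = r^-1 \<otimes> r^-1 pairs with
  every s \<otimes> s to the square Tr(s/r)^2 \<ge> 0, and with r \<otimes> r to Tr(1)^2 = g^2 \<noteq> 0;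
  hence x lies in C(S) but not in N(S).\<close>

lemma coords_nth_Q_basis:
  assumes b: "Q_basis (b::'f::field_char_0 list)" and i: "i < length b"
  shows "coords b (b ! i) i = 1"
proof -
  let ?q = "\<lambda>j. if j = i then (1::rat) else 0"
  have q: "(\<forall>j. length b \<le> j \<longrightarrow> ?q j = 0) \<and> b ! i = (\<Sum>j<length b. of_rat (?q j) * b ! j)"
    using i by (simp add: if_distrib[where f="\<lambda>c. of_rat c * _"] sum.delta cong: if_cong)
  from b have uniq: "\<exists>!q::nat \<Rightarrow> rat. (\<forall>j. length b \<le> j \<longrightarrow> q j = 0) \<and>
                         b ! i = (\<Sum>j<length b. of_rat (q j) * b ! j)"
    unfolding Q_basis_def by blast
  have "coords b (b ! i) = ?q"
    unfolding coords_def by (rule the1_equality[OF uniq]) (rule q)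
  then show ?thesis by simp
qed

lemma Q_basis_nonempty:
  assumes "Q_basis (b::'f::field_char_0 list)"
  shows "b \<noteq> []"
proof -
  from assms obtain q where "(\<Sum>i<length b. of_rat (q i) * b ! i) = (1::'f)"
    unfolding Q_basis_def by metis
  then show ?thesis by (cases b) auto
qed

lemma Tr_one_neq_zero:
  assumes "Q_basis (b::'f::field_char_0 list)"
  shows "Tr (1::'f) \<noteq> 0"
proof -
  define b' where "b' = (SOME b::'f list. Q_basis b)"
  have b': "Q_basis b'" unfolding b'_def using assms by (rule someI)
  have "Tr (1::'f) = (\<Sum>i<length b'. coords b' (b' ! i) i)"
    unfolding Tr_def trace_wrt_def b'_def by simp
  also have "\<dots> = of_nat (length b')"
    using coords_nth_Q_basis[OF b'] by simp
  finally show ?thesis using Q_basis_nonempty[OF b'] by simp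
qed

lemma lattice_has_nonzero:
  assumes "lattice (I::'f::field_char_0 set)"
  shows "\<exists>x\<in>I. x \<noteq> 0"
proof (rule ccontr)
  assume zero: "\<not> (\<exists>x\<in>I. x \<noteq> 0)"
  from assms obtain v where v: "Q_basis v"
    and I: "I = {\<Sum>i<length v. of_int (n i) * v ! i | n. True}"
    unfolding lattice_def by blast
  have "v ! i \<in> I" if "i < length v" for i
  proof -
    have "v ! i = (\<Sum>j<length v. of_int (if j = i then 1 else 0) * v ! j)"
      using that by (simp add: if_distrib[where f="\<lambda>c. of_int c * _"] sum.delta cong: if_cong)
    then show ?thesis
      unfolding I by (intro CollectI exI[of _ "\<lambda>j. if j = i then 1 else 0"]) simp
  qed
  with zero have vanish: "v ! i = 0" if "i < length v" for i
    using that by blast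
  from v obtain q where q: "(\<Sum>i<length v. of_rat (q i) * v ! i) = (1::'f)"
    unfolding Q_basis_def by metis
  have "(\<Sum>i<length v. of_rat (q i) * v ! i) = (0::'f)"
    using vanish by simp
  with q show False by simp
qed

lemma int_span_zero:
  assumes "\<forall>s\<in>S. s = 0"
  shows "int_span S \<subseteq> {0}"
  unfolding int_span_def using assms by (auto intro!: sum.neutral)

lemma F_weighted_stable_curve_nonzero_weight:
  assumes "lattice I" and "F_weighted_stable_curve I H V vert iota w g"
  shows "\<exists>r\<in>w ` H. r \<noteq> 0"
proof -
  have "int_span (w ` H) = I"
    using assms(2) unfolding F_weighted_stable_curve_def by blast
  then show ?thesis using lattice_has_nonzero[OF assms(1)] int_span_zero by blast
qed

lemma square_in_sq_span: "r \<in> W \<Longrightarrow> [(r, r)] \<in> sq_span W"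
  unfolding sq_span_def by (auto intro!: exI[of _ 1])

lemma tensor_pairing_squares: "tensor_pairing [(a, a)] [(r, r)] = (Tr (a * r))\<^sup>2"
  unfolding tensor_pairing_def trace_pairing_def by (simp add: power2_eq_square)

lemma N_set_subset_C_set: "N_set W \<subseteq> C_set W"
proof
  fix x
  assume "x \<in> N_set W"
  then have "tensor_pairing x [(r, r)] = 0" if "r \<in> W" for r
    using square_in_sq_span[OF that] unfolding N_set_def by blast
  then show "x \<in> C_set W" unfolding C_set_def by simp
qed

lemma square_in_C_set: "[(a, a)] \<in> C_set W"
  unfolding C_set_def by (simp add: tensor_pairing_squares)

lemma square_notin_N_set:
  assumes "r \<in> W" and "Tr (a * r) \<noteq> 0"
  shows "[(a, a)] \<notin> N_set W"
proof
  assume "[(a, a)] \<in> N_set W"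
  then have "tensor_pairing [(a, a)] [(r, r)] = 0"
    using square_in_sq_span[OF assms(1)] unfolding N_set_def by blast
  with assms(2) show False by (simp add: tensor_pairing_squares)
qed

lemma N_set_psubset_C_set:
  fixes W :: "'f::field_char_0 set"
  assumes "Q_basis (b::'f list)" and "r \<in> W" and "r \<noteq> 0"
  shows "N_set W \<subset> C_set W"
proof -
  have "Tr (inverse r * r) \<noteq> 0" using Tr_one_neq_zero[OF assms(1)] assms(3) by simp
  then have "[(inverse r, inverse r)] \<in> C_set W - N_set W"
    using assms(2) square_in_C_set square_notin_N_set by blast
  then show ?thesis using N_set_subset_C_set by blast
qed

theorem corollary3p2:
  fixes I :: "'f::field_char_0 set" and g :: nat
    and H :: "'h set" and V :: "'v set" and vert :: "'h \<Rightarrow> 'v" and iota :: "'h \<Rightarrow> 'h"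
    and w :: "'h \<Rightarrow> 'f"
  assumes "number_field_of_degree TYPE('f) g"
    and "totally_real TYPE('f)"
    and "lattice I"
    and "F_weighted_stable_curve I H V vert iota w g"
  shows "N_set (w ` H) \<subset> C_set (w ` H)"
proof -
  obtain b :: "'f list" where "Q_basis b"
    using assms(1) unfolding number_field_of_degree_def by blast
  moreover obtain r where "r \<in> w ` H" "r \<noteq> 0"
    using F_weighted_stable_curve_nonzero_weight[OF assms(3,4)] by blast
  ultimately show ?thesis by (rule N_set_psubset_C_set)
qed

end
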